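(* In the qubit system ($d=2$, $\mathcal H=\mathbb C^2$), for every $\alpha\in(1,2)$ and $\beta\in(-\infty,0)\cup(0,1)$ there exist a unitary $U_0$ on $\mathbb C^2$ and a pure input state $|\psi_0\rangle\in\mathbb C^2$ such that $$M_{\alpha,\beta}(U_0|\psi_0\rangle\langle\psi_0|U_0^\dagger)-M_{\alpha,\beta}(|\psi_0\rangle\langle\psi_0|)>\mathcal M_{\alpha,\beta}(U_0).$$
   Context: For a qubit, the pure stabilizer states are $|0\rangle,|1\rangle,|\pm\rangle=(|0\rangle\pm|1\rangle)/\sqrt2,|\pm i\rangle=(|0\rangle\pm i|1\rangle)/\sqrt2$ (up to global phase), and stabilizer states ($\mathcal S$) are their convex combinations. For $\alpha\in(0,1)\cup(1,\infty)$, $\beta\in(-\infty,0)\cup(0,\infty)$: $S_{\alpha,\beta}(\rho)=\frac{1}{(1-\alpha)\beta}[(\mathrm{Tr}\rho^\alpha)^\beta-1]$, $J_{\alpha,\beta}(\rho,\sigma)=S_{\alpha,\beta}(\tfrac{\rho+\sigma}{2})-\tfrac12S_{\alpha,\beta}(\rho)-\tfrac12S_{\alpha,\beta}(\sigma)$; for a pure state $M_{\alpha,\beta}(|\psi\rangle\langle\psi|)=\min_{|\phi\rangle}J_{\alpha,\beta}(|\psi\rangle\langle\psi|,|\phi\rangle\langle\phi|)$ over pure stabilizer states $|\phi\rangle$, and for general $\rho$, $M_{\alpha,\beta}(\rho)=\min\sum_jp_jM_{\alpha,\beta}(|\psi_j\rangle\langle\psi_j|)$ over pure-state decompositions of $\rho$.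 The magic generating power of a unitary $U$ is $\mathcal M_{\alpha,\beta}(U)=\max_{\rho\in\mathcal S}M_{\alpha,\beta}(U\rho U^\dagger)$. *)

theory Defs
  imports "HOL-Analysis.Analysis"
begin

type_synonym qvec = "complex ^ 2"
type_synonym qmat = "complex ^ 2 ^ 2"

definition adj :: "qmat \<Rightarrow> qmat" where
  "adj U = (\<chi> i j. cnj (U $ j $ i))"

definition unitary :: "qmat \<Rightarrow> bool" where
  "unitary U \<longleftrightarrow> U ** adj U = mat 1 \<and> adj U ** U = mat 1"

definition proj :: "qvec \<Rightarrow> qmat" where
  "proj \<psi> = (\<chi> i j. \<psi> $ i * cnj (\<psi> $ j))"

definition unit_vec :: "qvec \<Rightarrow> bool" where
  "unit_vec \<psi> \<longleftrightarrow> norm \<psi> = 1"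

definition mtrace :: "qmat \<Rightarrow> complex" where
  "mtrace A = A $ 1 $ 1 + A $ 2 $ 2"

definition mdet :: "qmat \<Rightarrow> complex" where
  "mdet A = A $ 1 $ 1 * A $ 2 $ 2 - A $ 1 $ 2 * A $ 2 $ 1"

definition eig_plus :: "qmat \<Rightarrow> real" where
  "eig_plus A = (Re (mtrace A) + sqrt ((Re (mtrace A))\<^sup>2 - 4 * Re (mdet A))) / 2"

definition eig_minus :: "qmat \<Rightarrow> real" where
  "eig_minus A = (Re (mtrace A) - sqrt ((Re (mtrace A))\<^sup>2 - 4 * Re (mdet A))) / 2"

text \<open>Tr rho^alpha via the spectral decomposition: sum of alpha-th powers of eigenvalues.\<close>
definition tr_pow :: "real \<Rightarrow> qmat \<Rightarrow> real" where
  "tr_pow \<alpha> \<rho> = eig_plus \<rho> powr \<alpha> + eig_minus \<rho> powr \<alpha>"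

definition S_ent :: "real \<Rightarrow> real \<Rightarrow> qmat \<Rightarrow> real" where
  "S_ent \<alpha> \<beta> \<rho> = ((tr_pow \<alpha> \<rho>) powr \<beta> - 1) / ((1 - \<alpha>) * \<beta>)"

definition J_div :: "real \<Rightarrow> real \<Rightarrow> qmat \<Rightarrow> qmat \<Rightarrow> real" where
  "J_div \<alpha> \<beta> \<rho> \<sigma> =
     S_ent \<alpha> \<beta> ((1/2) *\<^sub>R (\<rho> + \<sigma>)) - (1/2) * S_ent \<alpha> \<beta> \<rho> - (1/2) * S_ent \<alpha> \<beta> \<sigma>"

text \<open>The six pure single-qubit stabilizer states (up to global phase).\<close>
definition stab_pure :: "qvec set" where
  "stab_pure = {vector [1, 0], vector [0, 1],
                vector [1 / sqrt 2, 1 / sqrt 2], vector [1 / sqrt 2, - 1 / sqrt 2],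
                vector [1 / sqrt 2, \<i> / sqrt 2], vector [1 / sqrt 2, - \<i> / sqrt 2]}"

definition stab_states :: "qmat set" where
  "stab_states = convex hull (proj ` stab_pure)"

definition M_pure :: "real \<Rightarrow> real \<Rightarrow> qvec \<Rightarrow> real" where
  "M_pure \<alpha> \<beta> \<psi> = Min ((\<lambda>\<phi>. J_div \<alpha> \<beta> (proj \<psi>) (proj \<phi>)) ` stab_pure)"

definition decomp :: "qmat \<Rightarrow> (real \<times> qvec) list \<Rightarrow> bool" where
  "decomp \<rho> ds \<longleftrightarrow> (\<forall>(p, \<psi>) \<in> set ds. p \<ge> 0 \<and> unit_vec \<psi>)
      \<and> (\<Sum>(p, \<psi>)\<leftarrow>ds. p) = 1
      \<and> \<rho> = (\<Sum>(p, \<psi>)\<leftarrow>ds. p *\<^sub>R proj \<psi>)"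

definition M_mixed :: "real \<Rightarrow> real \<Rightarrow> qmat \<Rightarrow> real" where
  "M_mixed \<alpha> \<beta> \<rho> = Inf {(\<Sum>(p, \<psi>)\<leftarrow>ds. p * M_pure \<alpha> \<beta> \<psi>) | ds. decomp \<rho> ds}"

definition magic_gen_power :: "real \<Rightarrow> real \<Rightarrow> qmat \<Rightarrow> real" where
  "magic_gen_power \<alpha> \<beta> U = Sup ((\<lambda>\<rho>. M_mixed \<alpha> \<beta> (U ** \<rho> ** adj U)) ` stab_states)"

end

theory Submission
  imports Defs
begin

text \<open>
  For pure states the divergence \<open>J\<^sub>\<alpha>\<^sub>,\<^sub>\<beta>\<close> only sees the overlap: the even mixture of
  \<open>|\<psi>\<rangle>\<close> and \<open>|\<phi>\<rangle>\<close> has spectrum \<open>(1 \<plusminus> |\<langle>\<psi>|\<phi>\<rangle>|)/2\<close>, so \<open>J\<close> is the entropy \<open>K(\<lambda>)\<close> of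
  the binary spectrum \<open>{1 - \<lambda>, \<lambda>}\<close> at \<open>\<lambda> = (1 - |\<langle>\<psi>|\<phi>\<rangle>|)/2\<close>, and \<open>K\<close> increases on
  \<open>[0, 1/2]\<close>. A phase gate \<open>U\<^sub>0 = diag(1, w)\<close> with \<open>w\<close> close to \<open>1\<close> keeps every pure
  stabilizer state at overlap \<open>\<ge> |1 + w|/2\<close> from its image, and the convex roof turns this
  into the bound \<open>K(1/6401)\<close> on the magic generating power. A state \<open>\<psi>\<^sub>0\<close> close to \<open>|+\<rangle>\<close>
  whose image is far from all stabilizer states gains at least \<open>K(21/400) - K(49/1000)\<close>.
  This beats \<open>K(1/6401)\<close> because, by convexity of \<open>y \<mapsto> (1 - y\<^sup>\<beta>)/\<beta>\<close>, both sides reduce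
  to the corresponding gaps of \<open>Tr \<rho>\<^sup>\<alpha>\<close>, which are of order \<open>(\<alpha> - 1)(\<lambda>\<^sub>1 - \<lambda>\<^sub>2)\<close> and
  \<open>(\<alpha> - 1) \<lambda> (1 - ln \<lambda>)\<close> respectively.
\<close>

section \<open>Inequalities for real powers\<close>

lemma powr_le_one_plus_mult:
  fixes w a :: real
  assumes "0 \<le> w" "w \<le> 1" "a > 0"
  shows "a powr w \<le> 1 + w * (a - 1)"
  using Youngs_inequality_0[of w "1 - w" a 1] assms by (simp add: algebra_simps)

lemma one_plus_mult_le_powr:
  fixes p z :: real
  assumes "p \<ge> 1" "z > 0"
  shows "1 + p * (z - 1) \<le> z powr p"
proof -
  have "z = (z powr p) powr (1/p)"
    using assms by (simp add: powr_powr)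
  also have "\<dots> \<le> 1 + (1/p) * (z powr p - 1)"
    using powr_le_one_plus_mult[of "1/p" "z powr p"] assms by simp
  finally have "p * z \<le> p + (z powr p - 1)"
    using assms by (simp add: field_simps)
  then show ?thesis by (simp add: algebra_simps)
qed

lemma one_plus_mult_le_powr_neg:
  fixes b t :: real
  assumes "b < 0" "t > 0"
  shows "1 + b * (t - 1) \<le> t powr b"
proof -
  have "b * (t - 1) \<le> b * ln t"
    using ln_le_minus_one[OF assms(2)] assms(1) by (simp add: mult_le_cancel_left_neg)
  also have "1 + b * ln t \<le> exp (b * ln t)" by (rule exp_ge_add_one_self)
  finally show ?thesis
    using assms by (simp add: powr_def)
qed

lemma powr_minus_one_div_le:
  fixes b t :: real
  assumes "b < 1" "b \<noteq> 0" "t > 0"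
  shows "(t powr b - 1) / b \<le> t - 1"
proof (cases "b > 0")
  case True
  then show ?thesis
    using powr_le_one_plus_mult[of b t] assms by (simp add: divide_simps mult.commute)
next
  case False
  then show ?thesis
    using one_plus_mult_le_powr_neg[of b t] assms by (simp add: divide_simps mult.commute)
qed

lemma powr_tangent_div_le:
  fixes b x y :: real
  assumes "b < 1" "b \<noteq> 0" "x > 0" "y > 0"
  shows "y powr (b - 1) * (y - x) \<le> (y powr b - x powr b) / b"
proof -
  have ratio: "((x / y) powr b - 1) / b \<le> x / y - 1"
    using powr_minus_one_div_le assms by simp
  have "(x powr b - y powr b) / b = y powr b * (((x / y) powr b - 1) / b)"
    using assms by (simp add: powr_divide field_simps)
  also have "\<dots> \<le> y powr b * (x / y - 1)"
    using ratio by (rule mult_left_mono) simp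
  also have "\<dots> = y powr (b - 1) * (x - y)"
    using assms by (simp add: powr_diff field_simps)
  finally have "(x powr b - y powr b) / b \<le> y powr (b - 1) * (x - y)" .
  moreover have "(y powr b - x powr b) / b = - ((x powr b - y powr b) / b)"
    by (simp add: diff_divide_distrib)
  ultimately show ?thesis
    by (simp add: algebra_simps)
qed

lemma powr_ge_tangent:
  fixes p t t0 :: real
  assumes "p \<ge> 1" "t \<ge> 0" "t0 > 0"
  shows "t0 powr p + p * t0 powr (p - 1) * (t - t0) \<le> t powr p"
proof -
  have t0p: "t0 powr p = t0 powr (p - 1) * t0"
    using assms by (simp add: powr_diff)
  show ?thesis
  proof (cases "t = 0")
    case True
    have "(1 - p) * t0 powr p \<le> 0"
      using assms by (simp add: mult_nonpos_nonneg)
    then show ?thesis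
      using True t0p by (simp add: algebra_simps)
  next
    case False
    then have "1 + p * (t / t0 - 1) \<le> t powr p / t0 powr p"
      using one_plus_mult_le_powr[of p "t / t0"] assms by (simp add: powr_divide)
    then have "t0 powr p * (1 + p * (t / t0 - 1)) \<le> t powr p"
      using assms by (simp add: pos_le_divide_eq mult.commute)
    moreover have "t0 powr p * (1 + p * (t / t0 - 1)) = t0 powr p + p * t0 powr (p - 1) * (t - t0)"
      using assms t0p by (simp add: field_simps)
    ultimately show ?thesis by simp
  qed
qed

lemma powr_le_tangent:
  fixes s a b :: real
  assumes "0 \<le> s" "s \<le> 1" "a > 0" "b > 0"
  shows "b powr s \<le> a powr s + s * a powr (s - 1) * (b - a)"
proof -
  have "b powr s / a powr s \<le> 1 + s * (b / a - 1)"
    using powr_le_one_plus_mult[of s "b / a"] assms by (simp add: powr_divide)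
  moreover have "a powr s = a powr (s - 1) * a"
    using assms by (simp add: powr_diff)
  ultimately show ?thesis
    using assms by (simp add: field_simps)
qed

lemma powr_complement_diff_ge:
  fixes s l :: real
  assumes "0 \<le> s" "s \<le> 1" "0 < l" "l \<le> 1/2"
  shows "s * (1 - 2 * l) \<le> (1 - l) powr s - l powr s"
proof -
  have tangent: "l powr s \<le> (1 - l) powr s + s * (1 - l) powr (s - 1) * (2 * l - 1)"
    using powr_le_tangent[of s "1 - l" l] assms by (simp add: algebra_simps)
  have "1 \<le> (1 - l) powr (s - 1)"
    using powr_mono2'[of "s - 1" "1 - l" 1] assms by simp
  from mult_left_mono[OF this, of "s * (1 - 2 * l)"]
  have "s * (1 - 2 * l) \<le> s * (1 - 2 * l) * (1 - l) powr (s - 1)"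
    using assms by simp
  with tangent show ?thesis
    by (simp add: algebra_simps)
qed

lemma one_minus_powr_le:
  fixes p s :: real
  assumes "p > 0"
  shows "1 - p powr s \<le> - s * ln p"
proof -
  have "p powr s = exp (s * ln p)"
    using assms by (simp add: powr_def)
  then show ?thesis
    using exp_ge_add_one_self[of "s * ln p"] by linarith
qed

section \<open>Entropy of a binary spectrum\<close>

definition binary_tr_pow :: "real \<Rightarrow> real \<Rightarrow> real" where
  "binary_tr_pow a l = (1 - l) powr a + l powr a"

definition binary_entropy :: "real \<Rightarrow> real \<Rightarrow> real \<Rightarrow> real" where
  "binary_entropy a b l = (binary_tr_pow a l powr b - 1) / ((1 - a) * b)"

lemma binary_tr_pow_pos: "l < 1 \<Longrightarrow> 0 < binary_tr_pow a l"
  unfolding binary_tr_pow_def by (simp add: add_pos_nonneg)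

lemma binary_tr_pow_antimono:
  fixes a l m :: real
  assumes "1 < a" "0 \<le> l" "l \<le> m" "m \<le> 1/2"
  shows "binary_tr_pow a m \<le> binary_tr_pow a l"
proof (cases "m = 0")
  case True
  then show ?thesis using assms by simp
next
  case False
  then have "m > 0" using assms by simp
  have "(1 - m) powr a + a * (1 - m) powr (a - 1) * (m - l) \<le> (1 - l) powr a"
    using powr_ge_tangent[of a "1 - l" "1 - m"] assms by simp
  moreover have "m powr a + a * m powr (a - 1) * (l - m) \<le> l powr a"
    using powr_ge_tangent[of a l m] assms \<open>m > 0\<close> by simp
  moreover have "m powr (a - 1) \<le> (1 - m) powr (a - 1)"
    using assms \<open>m > 0\<close> by (intro powr_mono2) auto
  then have "a * m powr (a - 1) * (m - l) \<le> a * (1 - m) powr (a - 1) * (m - l)"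
    using assms by (intro mult_right_mono mult_left_mono) auto
  ultimately show ?thesis
    unfolding binary_tr_pow_def by (simp add: algebra_simps)
qed

lemma binary_entropy_zero: "binary_entropy a b 0 = 0"
  by (simp add: binary_entropy_def binary_tr_pow_def)

lemma binary_entropy_mono:
  fixes a b l m :: real
  assumes "1 < a" "b \<noteq> 0" "0 \<le> l" "l \<le> m" "m \<le> 1/2"
  shows "binary_entropy a b l \<le> binary_entropy a b m"
proof -
  have le: "binary_tr_pow a m \<le> binary_tr_pow a l"
    using binary_tr_pow_antimono assms by blast
  have pos: "0 < binary_tr_pow a m"
    using assms by (intro binary_tr_pow_pos) auto
  show ?thesis
  proof (cases "b > 0")
    case True
    then have "binary_tr_pow a m powr b \<le> binary_tr_pow a l powr b"
      using le pos by (intro powr_mono2) auto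
    moreover have "(1 - a) * b < 0"
      using True assms by (simp add: mult_neg_pos)
    ultimately show ?thesis
      unfolding binary_entropy_def by (intro divide_right_mono_neg) auto
  next
    case False
    then have "binary_tr_pow a l powr b \<le> binary_tr_pow a m powr b"
      using le pos assms by (intro powr_mono2') auto
    moreover have "(1 - a) * b > 0"
      using False assms by (simp add: mult_neg_neg)
    ultimately show ?thesis
      unfolding binary_entropy_def by (intro divide_right_mono) auto
  qed
qed

lemma binary_entropy_nonneg:
  "1 < a \<Longrightarrow> b \<noteq> 0 \<Longrightarrow> 0 \<le> l \<Longrightarrow> l \<le> 1/2 \<Longrightarrow> 0 \<le> binary_entropy a b l"
  using binary_entropy_mono[of a b 0 l] by (simp add: binary_entropy_zero)

lemma binary_entropy_altdef:
  assumes "a \<noteq> 1" "b \<noteq> 0"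
  shows "binary_entropy a b l = ((1 - binary_tr_pow a l powr b) / b) / (a - 1)"
  using assms by (simp add: binary_entropy_def field_simps)

lemma binary_tr_pow_gap:
  fixes a l1 l2 :: real
  assumes "1 < a" "a \<le> 2" "0 \<le> l2" "l2 < l1" "l1 \<le> 1/2"
  shows "(a - 1) * (l1 - l2) * (1 - 2 * l1) \<le> binary_tr_pow a l2 - binary_tr_pow a l1"
proof -
  define s where "s = a - 1"
  have "0 < s" "s \<le> 1"
    using assms by (auto simp: s_def)
  have "(1 - l1) powr a + a * (1 - l1) powr s * (l1 - l2) \<le> (1 - l2) powr a"
    using powr_ge_tangent[of a "1 - l2" "1 - l1"] assms by (simp add: s_def)
  moreover have "l1 powr a + a * l1 powr s * (l2 - l1) \<le> l2 powr a"
    using powr_ge_tangent[of a l2 l1] assms by (simp add: s_def)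
  ultimately have gap: "a * (l1 - l2) * ((1 - l1) powr s - l1 powr s)
      \<le> binary_tr_pow a l2 - binary_tr_pow a l1"
    unfolding binary_tr_pow_def by (simp add: algebra_simps)
  have lower: "s * (1 - 2 * l1) \<le> (1 - l1) powr s - l1 powr s"
    using powr_complement_diff_ge \<open>0 < s\<close> \<open>s \<le> 1\<close> assms by simp
  then have "0 \<le> (l1 - l2) * ((1 - l1) powr s - l1 powr s)"
    using \<open>0 < s\<close> assms by (intro mult_nonneg_nonneg order_trans[OF _ lower]) auto
  from mult_right_mono[OF _ this, of 1 a]
  have "(l1 - l2) * ((1 - l1) powr s - l1 powr s) \<le> a * (l1 - l2) * ((1 - l1) powr s - l1 powr s)"
    using assms by simp
  moreover have "(l1 - l2) * (s * (1 - 2 * l1)) \<le> (l1 - l2) * ((1 - l1) powr s - l1 powr s)"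
    using lower assms by (intro mult_left_mono) auto
  ultimately show ?thesis
    using gap by (simp add: s_def algebra_simps)
qed

lemma one_minus_binary_tr_pow_le:
  fixes a l :: real
  assumes "1 < a" "0 < l" "l < 1"
  shows "1 - binary_tr_pow a l \<le> (a - 1) * l * (1 - ln l)"
proof -
  define s where "s = a - 1"
  have "0 < s" using assms by (simp add: s_def)
  have split: "x powr a = x * x powr s" if "x > 0" for x :: real
    using that by (simp add: s_def powr_mult_base)
  have "- ln (1 - l) \<le> l / (1 - l)"
    using ln_le_minus_one[of "1 / (1 - l)"] assms by (simp add: ln_div field_simps)
  from mult_left_mono[OF this, of s] \<open>0 < s\<close>
  have "1 - (1 - l) powr s \<le> s * (l / (1 - l))"
    using one_minus_powr_le[of "1 - l" s] assms by simp
  from mult_left_mono[OF this, of "1 - l"]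
  have left: "(1 - l) * (1 - (1 - l) powr s) \<le> s * l"
    using assms by simp
  have "1 - l powr s \<le> s * (- ln l)"
    using one_minus_powr_le[of l s] assms by simp
  then have right: "l * (1 - l powr s) \<le> l * (s * (- ln l))"
    using assms by (intro mult_left_mono) auto
  have "1 - binary_tr_pow a l = (1 - l) * (1 - (1 - l) powr s) + l * (1 - l powr s)"
    unfolding binary_tr_pow_def using split[of l] split[of "1 - l"] assms by (simp add: algebra_simps)
  with left right show ?thesis
    by (simp add: s_def algebra_simps)
qed

lemma binary_entropy_lt_diff:
  fixes a b l1 l2 l3 :: real
  assumes "1 < a" "b < 1" "b \<noteq> 0" "0 < l3" "l3 \<le> l2" "l2 \<le> l1" "l1 \<le> 1/2"
    and gap: "1 - binary_tr_pow a l3 < binary_tr_pow a l2 - binary_tr_pow a l1"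
  shows "binary_entropy a b l3 < binary_entropy a b l1 - binary_entropy a b l2"
proof -
  define y1 y2 y3 where "y1 = binary_tr_pow a l1" "y2 = binary_tr_pow a l2" "y3 = binary_tr_pow a l3"
  have pos: "0 < y1" "0 < y2" "0 < y3"
    unfolding y1_y2_y3_def using assms by (auto intro!: binary_tr_pow_pos)
  have "y2 \<le> y3" "y3 \<le> 1"
    unfolding y1_y2_y3_def using assms binary_tr_pow_antimono[of a l3 l2] binary_tr_pow_antimono[of a 0 l3]
    by (auto simp: binary_tr_pow_def)
  have "y3 powr (b - 1) * (y3 - 1) \<le> (y3 powr b - 1) / b"
    using powr_tangent_div_le[of b 1 y3] assms pos by simp
  moreover have "(1 - y3 powr b) / b = - ((y3 powr b - 1) / b)"
    by (simp add: diff_divide_distrib)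
  ultimately have "(1 - y3 powr b) / b \<le> y3 powr (b - 1) * (1 - y3)"
    by (simp add: algebra_simps)
  also have "\<dots> \<le> y2 powr (b - 1) * (1 - y3)"
    using \<open>y2 \<le> y3\<close> \<open>y3 \<le> 1\<close> pos assms by (intro mult_right_mono powr_mono2') auto
  also have "\<dots> < y2 powr (b - 1) * (y2 - y1)"
    using gap pos by (simp add: y1_y2_y3_def)
  also have "\<dots> \<le> (y2 powr b - y1 powr b) / b"
    using powr_tangent_div_le[of b y1 y2] assms pos by simp
  finally have "((1 - y3 powr b) / b) / (a - 1) < ((y2 powr b - y1 powr b) / b) / (a - 1)"
    by (rule divide_strict_right_mono) (use assms in simp)
  then show ?thesis
    using assms by (simp add: binary_entropy_altdef y1_y2_y3_def diff_divide_distrib)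
qed

definition braket :: "qvec \<Rightarrow> qvec \<Rightarrow> complex" where
  "braket a b = cnj (a $ 1) * b $ 1 + cnj (a $ 2) * b $ 2"

lemma unit_vec_iff: "unit_vec a \<longleftrightarrow> cmod (a $ 1) ^ 2 + cmod (a $ 2) ^ 2 = 1"
  unfolding unit_vec_def norm_vec_def L2_set_def sum_2 by simp

lemma braket_self: "braket a a = of_real (cmod (a $ 1) ^ 2 + cmod (a $ 2) ^ 2)"
  unfolding braket_def cmod_power2 by (simp add: complex_eq_iff power2_eq_square)

lemma braket_matrix_vector_mult: "braket (U *v x) (U *v y) = braket x ((adj U ** U) *v y)"
  by (simp add: braket_def adj_def matrix_vector_mult_def matrix_matrix_mult_def sum_2 algebra_simps)

lemma unit_vec_unitary_mult:
  assumes "unitary U" "unit_vec x"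
  shows "unit_vec (U *v x)"
proof -
  have "braket (U *v x) (U *v x) = braket x x"
    using assms(1) by (simp add: braket_matrix_vector_mult unitary_def)
  then have "cmod ((U *v x) $ 1) ^ 2 + cmod ((U *v x) $ 2) ^ 2 = cmod (x $ 1) ^ 2 + cmod (x $ 2) ^ 2"
    by (simp only: braket_self of_real_eq_iff)
  then show ?thesis
    using assms(2) unfolding unit_vec_iff by simp
qed

lemma cmod_braket_le_one:
  assumes "unit_vec a" "unit_vec b"
  shows "cmod (braket a b) \<le> 1"
proof -
  have "(cmod (a $ 1) ^ 2 + cmod (a $ 2) ^ 2) * (cmod (b $ 1) ^ 2 + cmod (b $ 2) ^ 2)
      - cmod (braket a b) ^ 2 = cmod (a $ 1 * b $ 2 - a $ 2 * b $ 1) ^ 2"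
    unfolding braket_def cmod_power2 by (simp add: field_simps power2_eq_square)
  then have "1 - cmod (braket a b) ^ 2 = cmod (a $ 1 * b $ 2 - a $ 2 * b $ 1) ^ 2"
    using assms unfolding unit_vec_iff by simp
  then have "cmod (braket a b) ^ 2 \<le> 1 ^ 2"
    by (smt (verit) zero_le_power2 power_one)
  then show ?thesis
    by (rule power2_le_imp_le) simp
qed

lemma S_ent_mixture:
  assumes "unit_vec a" "unit_vec b"
  shows "S_ent \<alpha> \<beta> ((1/2) *\<^sub>R (proj a + proj b)) = binary_entropy \<alpha> \<beta> ((1 - cmod (braket a b)) / 2)"
proof -
  define \<rho> where "\<rho> = (1/2 :: real) *\<^sub>R (proj a + proj b)"
  define c where "c = cmod (braket a b)"
  have "0 \<le> c" "c \<le> 1"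
    using cmod_braket_le_one[OF assms] by (auto simp: c_def)
  have tr: "Re (mtrace \<rho>) = 1"
    using assms unfolding \<rho>_def mtrace_def proj_def unit_vec_iff cmod_power2
    by simp (simp add: scaleR_conv_of_real field_simps power2_eq_square)
  have "4 * Re (mdet \<rho>)
      = (cmod (a $ 1) ^ 2 + cmod (a $ 2) ^ 2) * (cmod (b $ 1) ^ 2 + cmod (b $ 2) ^ 2) - c ^ 2"
    unfolding \<rho>_def c_def mdet_def proj_def braket_def cmod_power2
    by simp (simp add: scaleR_conv_of_real field_simps power2_eq_square)
  then have "4 * Re (mdet \<rho>) = 1 - c ^ 2"
    using assms unfolding unit_vec_iff by simp
  then have "sqrt ((Re (mtrace \<rho>))\<^sup>2 - 4 * Re (mdet \<rho>)) = c"
    using tr \<open>0 \<le> c\<close> by simp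
  then have "eig_plus \<rho> = 1 - (1 - c) / 2" "eig_minus \<rho> = (1 - c) / 2"
    unfolding eig_plus_def eig_minus_def using tr by (simp_all add: field_simps)
  then have "tr_pow \<alpha> \<rho> = binary_tr_pow \<alpha> ((1 - c) / 2)"
    unfolding tr_pow_def binary_tr_pow_def by (simp only:)
  then show ?thesis
    unfolding S_ent_def binary_entropy_def \<rho>_def c_def by (simp only:)
qed

lemma S_ent_proj:
  assumes "unit_vec a"
  shows "S_ent \<alpha> \<beta> (proj a) = 0"
proof -
  have "(1/2 :: real) *\<^sub>R (proj a + proj a) = proj a"
    by (simp add: scaleR_2[symmetric])
  moreover have "cmod (braket a a) = 1"
    using assms by (simp add: braket_self unit_vec_iff)
  ultimately show ?thesis
    using S_ent_mixture[OF assms assms, of \<alpha> \<beta>] by (simp add: binary_entropy_zero)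
qed

lemma J_div_proj:
  "unit_vec a \<Longrightarrow> unit_vec b \<Longrightarrow>
     J_div \<alpha> \<beta> (proj a) (proj b) = binary_entropy \<alpha> \<beta> ((1 - cmod (braket a b)) / 2)"
  unfolding J_div_def by (simp add: S_ent_mixture S_ent_proj)

section \<open>Overlaps with stabilizer states\<close>

lemma finite_stab_pure: "finite stab_pure"
  unfolding stab_pure_def by simp

lemma unit_vec_stab_pure: "\<phi> \<in> stab_pure \<Longrightarrow> unit_vec \<phi>"
  unfolding stab_pure_def unit_vec_iff by (auto simp: power2_eq_square norm_divide)

lemma stab_pure_moduli:
  assumes "\<phi> \<in> stab_pure"
  shows "(cmod (\<phi> $ 1) ^ 2, cmod (\<phi> $ 2) ^ 2) \<in> {(1, 0), (0, 1), (1/2, 1/2)}"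
  using assms unfolding stab_pure_def by (auto simp: power2_eq_square norm_divide)

lemma cmod_braket_basis:
  "cmod (braket \<psi> (vector [1, 0])) = cmod (\<psi> $ 1)" "cmod (braket \<psi> (vector [0, 1])) = cmod (\<psi> $ 2)"
  by (simp_all add: braket_def)

lemma cmod_braket_balanced_sq:
  fixes \<psi> :: qvec
  defines "c \<equiv> cnj (\<psi> $ 1) * \<psi> $ 2" and "N \<equiv> cmod (\<psi> $ 1) ^ 2 + cmod (\<psi> $ 2) ^ 2"
  shows "2 * cmod (braket \<psi> (vector [1 / sqrt 2, 1 / sqrt 2])) ^ 2 = N + 2 * Re c"
    and "2 * cmod (braket \<psi> (vector [1 / sqrt 2, - 1 / sqrt 2])) ^ 2 = N - 2 * Re c"
    and "2 * cmod (braket \<psi> (vector [1 / sqrt 2, \<i> / sqrt 2])) ^ 2 = N + 2 * Im c"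
    and "2 * cmod (braket \<psi> (vector [1 / sqrt 2, - \<i> / sqrt 2])) ^ 2 = N - 2 * Im c"
  unfolding braket_def cmod_power2 c_def N_def
  by (simp_all add: power2_eq_square field_simps)

lemma cmod_braket_stab_pure_sq:
  fixes \<psi> :: qvec
  defines "c \<equiv> cnj (\<psi> $ 1) * \<psi> $ 2" and "N \<equiv> cmod (\<psi> $ 1) ^ 2 + cmod (\<psi> $ 2) ^ 2"
  assumes "\<phi> \<in> stab_pure"
  shows "2 * cmod (braket \<psi> \<phi>) ^ 2 \<in> {2 * cmod (\<psi> $ 1) ^ 2, 2 * cmod (\<psi> $ 2) ^ 2,
    N + 2 * Re c, N - 2 * Re c, N + 2 * Im c, N - 2 * Im c}"
  using assms(3) unfolding stab_pure_def c_def N_def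
  by (elim insertE emptyE) (simp_all only: cmod_braket_basis cmod_braket_balanced_sq insert_iff simp_thms)

lemma stab_overlap_le:
  fixes \<psi> :: qvec
  defines "c \<equiv> cnj (\<psi> $ 1) * \<psi> $ 2" and "N \<equiv> cmod (\<psi> $ 1) ^ 2 + cmod (\<psi> $ 2) ^ 2"
  assumes "\<phi> \<in> stab_pure" "0 \<le> r"
    and "cmod (\<psi> $ 1) ^ 2 \<le> r ^ 2" "cmod (\<psi> $ 2) ^ 2 \<le> r ^ 2"
    and "N + 2 * \<bar>Re c\<bar> \<le> 2 * r ^ 2" "N + 2 * \<bar>Im c\<bar> \<le> 2 * r ^ 2"
  shows "cmod (braket \<psi> \<phi>) \<le> r"
proof -
  have "Re c \<le> \<bar>Re c\<bar>" "- Re c \<le> \<bar>Re c\<bar>" "Im c \<le> \<bar>Im c\<bar>" "- Im c \<le> \<bar>Im c\<bar>"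
    by simp_all
  then have "cmod (braket \<psi> \<phi>) ^ 2 \<le> r ^ 2"
    using cmod_braket_stab_pure_sq[OF assms(3), of \<psi>] assms(5-) unfolding c_def[symmetric] N_def[symmetric]
    by (elim insertE emptyE) linarith+
  then show ?thesis
    using \<open>0 \<le> r\<close> by (rule power2_le_imp_le)
qed

lemma M_pure_le_overlap:
  assumes "unit_vec \<psi>" "\<phi> \<in> stab_pure"
  shows "M_pure \<alpha> \<beta> \<psi> \<le> binary_entropy \<alpha> \<beta> ((1 - cmod (braket \<psi> \<phi>)) / 2)"
proof -
  have "M_pure \<alpha> \<beta> \<psi> \<le> J_div \<alpha> \<beta> (proj \<psi>) (proj \<phi>)"
    unfolding M_pure_def using assms finite_stab_pure by (intro Min_le) auto
  then show ?thesis
    using assms by (simp add: J_div_proj unit_vec_stab_pure)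
qed

lemma M_pure_ge_overlap:
  assumes "1 < \<alpha>" "\<beta> \<noteq> 0" "unit_vec \<psi>" "0 \<le> l"
    and overlap: "\<And>\<phi>. \<phi> \<in> stab_pure \<Longrightarrow> cmod (braket \<psi> \<phi>) \<le> 1 - 2 * l"
  shows "binary_entropy \<alpha> \<beta> l \<le> M_pure \<alpha> \<beta> \<psi>"
  unfolding M_pure_def
proof (subst Min_ge_iff, safe)
  fix \<phi> assume "\<phi> \<in> stab_pure"
  then have "binary_entropy \<alpha> \<beta> l \<le> binary_entropy \<alpha> \<beta> ((1 - cmod (braket \<psi> \<phi>)) / 2)"
    using assms overlap by (intro binary_entropy_mono) force+
  then show "binary_entropy \<alpha> \<beta> l \<le> J_div \<alpha> \<beta> (proj \<psi>) (proj \<phi>)"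
    using assms \<open>\<phi> \<in> stab_pure\<close> by (simp add: J_div_proj unit_vec_stab_pure)
qed (auto simp: finite_stab_pure stab_pure_def)

lemma M_pure_nonneg: "1 < \<alpha> \<Longrightarrow> \<beta> \<noteq> 0 \<Longrightarrow> unit_vec \<psi> \<Longrightarrow> 0 \<le> M_pure \<alpha> \<beta> \<psi>"
  using M_pure_ge_overlap[of \<alpha> \<beta> \<psi> 0]
  by (simp add: binary_entropy_zero cmod_braket_le_one unit_vec_stab_pure)

lemma M_mixed_le:
  assumes "1 < \<alpha>" "\<beta> \<noteq> 0" "decomp \<rho> ds"
  shows "M_mixed \<alpha> \<beta> \<rho> \<le> (\<Sum>(p, \<psi>)\<leftarrow>ds. p * M_pure \<alpha> \<beta> \<psi>)"
  unfolding M_mixed_def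
proof (rule cInf_lower)
  show "bdd_below {\<Sum>(p, \<psi>)\<leftarrow>ds. p * M_pure \<alpha> \<beta> \<psi> |ds. decomp \<rho> ds}"
  proof (rule bdd_belowI, safe)
    fix ds' assume "decomp \<rho> ds'"
    then show "0 \<le> (\<Sum>(p, \<psi>)\<leftarrow>ds'. p * M_pure \<alpha> \<beta> \<psi>)"
      using M_pure_nonneg[OF assms(1,2)] unfolding decomp_def
      by (intro sum_list_nonneg) fastforce
  qed
qed (use assms in blast)

lemma decomp_in_convex_hull:
  assumes "finite A" "\<forall>\<psi>\<in>A. unit_vec \<psi>" "\<rho> \<in> convex hull (proj ` A)"
  obtains ds where "decomp \<rho> ds" "\<forall>(p, \<psi>)\<in>set ds. \<psi> \<in> A"
proof -
  from assms obtain u where u: "\<forall>x\<in>proj ` A. 0 \<le> u x" "sum u (proj ` A) = 1"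
      "(\<Sum>x\<in>proj ` A. u x *\<^sub>R x) = \<rho>"
    by (auto simp: convex_hull_finite)
  obtain ys where ys: "distinct ys" "set ys = proj ` A"
    using finite_distinct_list[of "proj ` A"] assms(1) by blast
  define ds where "ds = map (\<lambda>y. (u y, inv_into A proj y)) ys"
  have inv: "inv_into A proj y \<in> A" "proj (inv_into A proj y) = y" if "y \<in> proj ` A" for y
    using that by (auto intro: inv_into_into f_inv_into_f)
  have "decomp \<rho> ds"
    unfolding decomp_def
  proof (intro conjI)
    show "\<forall>(p, \<psi>)\<in>set ds. 0 \<le> p \<and> unit_vec \<psi>"
      unfolding ds_def using u(1) ys(2) inv assms(2) by auto
    have "(\<Sum>(p, \<psi>)\<leftarrow>ds. p) = sum u (proj ` A)"
      unfolding ds_def using ys by (simp add: comp_def sum_list_distinct_conv_sum_set)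
    then show "(\<Sum>(p, \<psi>)\<leftarrow>ds. p) = 1"
      using u(2) by simp
    have "(\<Sum>(p, \<psi>)\<leftarrow>ds. p *\<^sub>R proj \<psi>) = (\<Sum>y\<in>proj ` A. u y *\<^sub>R proj (inv_into A proj y))"
      unfolding ds_def using ys by (simp add: comp_def sum_list_distinct_conv_sum_set)
    also have "\<dots> = (\<Sum>y\<in>proj ` A. u y *\<^sub>R y)"
      by (rule sum.cong) (simp_all add: inv)
    finally show "\<rho> = (\<Sum>(p, \<psi>)\<leftarrow>ds. p *\<^sub>R proj \<psi>)"
      using u(3) by simp
  qed
  moreover have "\<forall>(p, \<psi>)\<in>set ds. \<psi> \<in> A"
    unfolding ds_def using ys inv by auto
  ultimately show ?thesis ..
qed

lemma proj_matrix_vector_mult: "proj (U *v x) = U ** proj x ** adj U"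
  by (simp add: vec_eq_iff proj_def matrix_matrix_mult_def matrix_vector_mult_def adj_def
      sum_2 algebra_simps forall_2)

lemma linear_matrix_conj: "linear (\<lambda>A :: qmat. U ** A ** V)"
  by (rule linearI)
    (simp add: vec_eq_iff matrix_matrix_mult_def sum_2 algebra_simps,
     simp add: matrix_scalar_ac scalar_matrix_assoc)

lemma magic_gen_power_le:
  assumes "1 < \<alpha>" "\<beta> \<noteq> 0" "unitary U"
    and bound: "\<And>\<phi>. \<phi> \<in> stab_pure \<Longrightarrow> M_pure \<alpha> \<beta> (U *v \<phi>) \<le> c"
  shows "magic_gen_power \<alpha> \<beta> U \<le> c"
  unfolding magic_gen_power_def
proof (rule cSUP_least)
  show "stab_states \<noteq> {}"
    unfolding stab_states_def stab_pure_def by simp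
next
  fix \<rho> assume "\<rho> \<in> stab_states"
  then have "U ** \<rho> ** adj U \<in> (\<lambda>A. U ** A ** adj U) ` stab_states"
    by blast
  also have "\<dots> = convex hull (proj ` (\<lambda>\<phi>. U *v \<phi>) ` stab_pure)"
    unfolding stab_states_def convex_hull_linear_image[OF linear_matrix_conj] image_image
      proj_matrix_vector_mult ..
  finally have "U ** \<rho> ** adj U \<in> convex hull (proj ` (\<lambda>\<phi>. U *v \<phi>) ` stab_pure)" .
  moreover have "finite ((\<lambda>\<phi>. U *v \<phi>) ` stab_pure)" "\<forall>\<psi>\<in>(\<lambda>\<phi>. U *v \<phi>) ` stab_pure. unit_vec \<psi>"
    using finite_stab_pure unit_vec_stab_pure unit_vec_unitary_mult[OF assms(3)] by auto
  ultimately obtain ds where ds: "decomp (U ** \<rho> ** adj U) ds"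
    and mem: "\<forall>(p, \<psi>)\<in>set ds. \<psi> \<in> (\<lambda>\<phi>. U *v \<phi>) ` stab_pure"
    using decomp_in_convex_hull by blast
  have "M_mixed \<alpha> \<beta> (U ** \<rho> ** adj U) \<le> (\<Sum>(p, \<psi>)\<leftarrow>ds. p * M_pure \<alpha> \<beta> \<psi>)"
    using M_mixed_le assms ds by blast
  also have "\<dots> \<le> (\<Sum>(p, \<psi>)\<leftarrow>ds. p * c)"
  proof (rule sum_list_mono, clarify)
    fix p \<psi> assume "(p, \<psi>) \<in> set ds"
    then have "0 \<le> p" and "M_pure \<alpha> \<beta> \<psi> \<le> c"
      using ds mem bound unfolding decomp_def by auto
    then show "p * M_pure \<alpha> \<beta> \<psi> \<le> p * c"
      by (rule mult_left_mono[rotated])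
  qed
  also have "\<dots> = c"
    using ds unfolding decomp_def by (simp add: sum_list_mult_const case_prod_beta')
  finally show "M_mixed \<alpha> \<beta> (U ** \<rho> ** adj U) \<le> c" .
qed

definition phase_gate :: "complex \<Rightarrow> qmat" where
  "phase_gate w = (\<chi> i j. if i = j then (if i = 1 then 1 else w) else 0)"

lemma phase_gate_apply: "(phase_gate w *v x) $ 1 = x $ 1" "(phase_gate w *v x) $ 2 = w * x $ 2"
  by (simp_all add: phase_gate_def matrix_vector_mult_def sum_2)

lemma unitary_phase_gate:
  assumes "cmod w = 1"
  shows "unitary (phase_gate w)"
proof -
  have "w * cnj w = 1"
    using assms by (simp add: complex_norm_square[symmetric])
  then show ?thesis
    unfolding unitary_def
    by (simp add: vec_eq_iff phase_gate_def adj_def matrix_matrix_mult_def mat_def sum_2 forall_2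
        mult.commute)
qed

lemma braket_phase_gate:
  "braket (phase_gate w *v x) x = of_real (cmod (x $ 1) ^ 2) + cnj w * of_real (cmod (x $ 2) ^ 2)"
  unfolding braket_def phase_gate_apply complex_norm_square by (simp add: algebra_simps)

lemma cmod_braket_phase_gate_stab_pure:
  assumes "cmod w = 1" "\<phi> \<in> stab_pure"
  shows "cmod (braket (phase_gate w *v \<phi>) \<phi>) \<in> {1, cmod (1 + w) / 2}"
proof -
  from stab_pure_moduli[OF assms(2)]
  consider "cmod (\<phi> $ 1) ^ 2 = 1" "cmod (\<phi> $ 2) ^ 2 = 0"
    | "cmod (\<phi> $ 1) ^ 2 = 0" "cmod (\<phi> $ 2) ^ 2 = 1"
    | "cmod (\<phi> $ 1) ^ 2 = 1/2" "cmod (\<phi> $ 2) ^ 2 = 1/2"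
    by auto
  then show ?thesis
  proof cases
    case 3
    then have "braket (phase_gate w *v \<phi>) \<phi> = cnj (1 + w) / 2"
      by (simp only: braket_phase_gate) (simp add: field_simps)
    then have "cmod (braket (phase_gate w *v \<phi>) \<phi>) = cmod (1 + w) / 2"
      by (simp only: norm_divide complex_mod_cnj) simp
    then show ?thesis by simp
  qed (simp_all only: braket_phase_gate, use assms(1) in simp_all)
qed

lemma magic_gen_power_phase_gate_le:
  assumes "1 < \<alpha>" "\<beta> \<noteq> 0" "cmod w = 1"
  shows "magic_gen_power \<alpha> \<beta> (phase_gate w) \<le> binary_entropy \<alpha> \<beta> ((1 - cmod (1 + w) / 2) / 2)"
proof (rule magic_gen_power_le[OF assms(1,2) unitary_phase_gate[OF assms(3)]])
  fix \<phi> assume \<phi>: "\<phi> \<in> stab_pure"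
  let ?l = "(1 - cmod (1 + w) / 2) / 2"
  have "cmod (1 + w) \<le> 2"
    using norm_triangle_ineq[of 1 w] assms(3) by simp
  then have l: "0 \<le> ?l" "?l \<le> 1/2"
    by auto
  from cmod_braket_phase_gate_stab_pure[OF assms(3) \<phi>]
  have "binary_entropy \<alpha> \<beta> ((1 - cmod (braket (phase_gate w *v \<phi>) \<phi>)) / 2) \<le> binary_entropy \<alpha> \<beta> ?l"
  proof (elim insertE emptyE)
    assume "cmod (braket (phase_gate w *v \<phi>) \<phi>) = 1"
    then show ?thesis
      using binary_entropy_nonneg[OF assms(1,2) l] by (simp add: binary_entropy_zero)
  qed (simp only: order_refl)
  moreover have "M_pure \<alpha> \<beta> (phase_gate w *v \<phi>)
      \<le> binary_entropy \<alpha> \<beta> ((1 - cmod (braket (phase_gate w *v \<phi>) \<phi>)) / 2)"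
    using unit_vec_unitary_mult[OF unitary_phase_gate[OF assms(3)] unit_vec_stab_pure[OF \<phi>]] \<phi>
    by (rule M_pure_le_overlap)
  ultimately show "M_pure \<alpha> \<beta> (phase_gate w *v \<phi>) \<le> binary_entropy \<alpha> \<beta> ?l"
    by linarith
qed

section \<open>The witness\<close>

text \<open>\<open>phase0\<close> is the square of the unit number \<open>(6399 + 160 \<i>) / 6401\<close>.\<close>

definition phase0 :: complex where
  "phase0 = Complex (40921601 / 40972801) (2047680 / 40972801)"

definition psi0 :: qvec where
  "psi0 = vector [15/17, Complex (7202457768 / 20199590893) (6203445920 / 20199590893)]"

definition psi1 :: qvec where
  "psi1 = vector [15/17, Complex (168/493) (160/493)]"

lemma cmod_phase0: "cmod phase0 = 1"
  unfolding phase0_def cmod_def by (simp add: power2_eq_square)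

lemma cmod_one_plus_phase0: "cmod (1 + phase0) = 2 * (6399 / 6401)"
proof -
  have "cmod (1 + phase0) = sqrt ((2 * (6399 / 6401)) ^ 2)"
    unfolding phase0_def cmod_def by (simp add: power2_eq_square)
  then show ?thesis
    by simp
qed

lemma phase_gate_psi0: "phase_gate phase0 *v psi0 = psi1"
  by (simp add: vec_eq_iff forall_2 phase_gate_apply psi0_def psi1_def phase0_def complex_eq_iff)

lemma unit_vec_psi0: "unit_vec psi0"
  unfolding unit_vec_iff cmod_power2 by (simp add: psi0_def power2_eq_square)

lemma unit_vec_psi1: "unit_vec psi1"
  unfolding unit_vec_iff cmod_power2 by (simp add: psi1_def power2_eq_square)

lemma M_pure_psi1_ge: "1 < \<alpha> \<Longrightarrow> \<beta> \<noteq> 0 \<Longrightarrow> binary_entropy \<alpha> \<beta> (21/400) \<le> M_pure \<alpha> \<beta> psi1"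
proof (rule M_pure_ge_overlap[OF _ _ unit_vec_psi1])
  fix \<phi> assume "\<phi> \<in> stab_pure"
  then have "cmod (braket psi1 \<phi>) \<le> 179/200"
    by (rule stab_overlap_le) (unfold cmod_power2, simp_all add: psi1_def power2_eq_square)
  then show "cmod (braket psi1 \<phi>) \<le> 1 - 2 * (21/400)"
    by simp
qed simp_all

lemma M_pure_psi0_le:
  assumes "1 < \<alpha>" "\<beta> \<noteq> 0"
  shows "M_pure \<alpha> \<beta> psi0 \<le> binary_entropy \<alpha> \<beta> (49/1000)"
proof -
  define plus :: qvec where "plus = vector [1 / sqrt 2, 1 / sqrt 2]"
  have "plus \<in> stab_pure"
    unfolding stab_pure_def plus_def by simp
  have "2 * (451/500) ^ 2 \<le> cmod (psi0 $ 1) ^ 2 + cmod (psi0 $ 2) ^ 2 + 2 * Re (cnj (psi0 $ 1) * psi0 $ 2)"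
    unfolding cmod_power2 by (simp add: psi0_def power2_eq_square)
  also have "\<dots> = 2 * cmod (braket psi0 plus) ^ 2"
    unfolding plus_def by (rule cmod_braket_balanced_sq(1)[symmetric])
  finally have "(451/500) ^ 2 \<le> cmod (braket psi0 plus) ^ 2"
    by simp
  then have "451/500 \<le> cmod (braket psi0 plus)"
    by (rule power2_le_imp_le) simp
  then have "binary_entropy \<alpha> \<beta> ((1 - cmod (braket psi0 plus)) / 2) \<le> binary_entropy \<alpha> \<beta> (49/1000)"
    using cmod_braket_le_one[OF unit_vec_psi0 unit_vec_stab_pure[OF \<open>plus \<in> stab_pure\<close>]] assms
    by (intro binary_entropy_mono) auto
  moreover have "M_pure \<alpha> \<beta> psi0 \<le> binary_entropy \<alpha> \<beta> ((1 - cmod (braket psi0 plus)) / 2)"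
    using unit_vec_psi0 \<open>plus \<in> stab_pure\<close> by (rule M_pure_le_overlap)
  ultimately show ?thesis
    by linarith
qed

lemma binary_entropy_witness_gap:
  fixes \<alpha> \<beta> :: real
  assumes "1 < \<alpha>" "\<alpha> < 2" "\<beta> < 1" "\<beta> \<noteq> 0"
  shows "binary_entropy \<alpha> \<beta> (1/6401) < binary_entropy \<alpha> \<beta> (21/400) - binary_entropy \<alpha> \<beta> (49/1000)"
proof (rule binary_entropy_lt_diff)
  have "ln (6401 :: real) \<le> ln (2 ^ 13)"
    by simp
  also have "\<dots> \<le> 13 * (25/36)"
    using ln_realpow[of 2 13] ln2_le_25_over_36 by simp
  finally have "(1/6401) * (1 - ln (1/6401)) < (21/400 - 49/1000) * (1 - 2 * (21/400 :: real))"
    by (simp add: ln_div)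
  from mult_strict_left_mono[OF this, of "\<alpha> - 1"]
  have "(\<alpha> - 1) * (1/6401) * (1 - ln (1/6401)) < (\<alpha> - 1) * (21/400 - 49/1000) * (1 - 2 * (21/400))"
    using assms by (simp only: mult.assoc diff_gt_0_iff_gt)
  then show "1 - binary_tr_pow \<alpha> (1/6401) < binary_tr_pow \<alpha> (49/1000) - binary_tr_pow \<alpha> (21/400)"
    using one_minus_binary_tr_pow_le[of \<alpha> "1/6401"] binary_tr_pow_gap[of \<alpha> "49/1000" "21/400"] assms
    by linarith
qed (use assms in simp_all)

theorem proposition5:
  fixes \<alpha> \<beta> :: real
  assumes "1 < \<alpha>" and "\<alpha> < 2" and "\<beta> < 1" and "\<beta> \<noteq> 0"
  shows "\<exists>U \<psi>. unitary U \<and> unit_vec \<psi> \<and>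
           M_pure \<alpha> \<beta> (U *v \<psi>) - M_pure \<alpha> \<beta> \<psi> > magic_gen_power \<alpha> \<beta> U"
proof (intro exI conjI)
  show "unitary (phase_gate phase0)"
    by (rule unitary_phase_gate[OF cmod_phase0])
  show "unit_vec psi0"
    by (rule unit_vec_psi0)
  have "magic_gen_power \<alpha> \<beta> (phase_gate phase0) \<le> binary_entropy \<alpha> \<beta> (1/6401)"
    using magic_gen_power_phase_gate_le[OF assms(1,4) cmod_phase0] by (simp add: cmod_one_plus_phase0)
  then show "M_pure \<alpha> \<beta> (phase_gate phase0 *v psi0) - M_pure \<alpha> \<beta> psi0 > magic_gen_power \<alpha> \<beta> (phase_gate phase0)"
    unfolding phase_gate_psi0
    using M_pure_psi1_ge[OF assms(1,4)] M_pure_psi0_le[OF assms(1,4)] binary_entropy_witness_gap[OF assms]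
    by linarith
qed

end
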